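(* Let $F$ be an entire function with at least one zero, and $\ell\in\mathbb{Z}$. Its Newton map $N_F(z)=z-F(z)/F'(z)$ belongs to the class $\mathbf{R}_\ell$ if and only if $\ell=1$ and $$F(z)=e^{\Lambda z}\Psi(e^{2\pi iz}),\qquad \Psi(w)=w^{m_0}P(w)e^{Q(w)+\widetilde{Q}(1/w)},$$ where $\Lambda\in\mathbb{C}$, $m_0\in\mathbb{Z}$, and $P,Q,\widetilde{Q}$ are polynomials with $P(0)\neq0$ and $P^{-1}(0)\cap\mathbb{C}^*\neq\emptyset$; in addition $\Lambda\neq-2\pi i(m_0+\deg P)$ if $Q$ is constant, and $\Lambda\neq-2\pi i m_0$ if $\widetilde{Q}$ is constant.
   Context: For $\ell\in\mathbb{Z}$, $\mathbf{R}_\ell$ is the class of meromorphic functions $f(z)=\ell z+R(e^{2\pi iz})$ where $R$ is a non-constant rational map with $R(0)\neq\infty$, $R(\infty)\neq\infty$ and $R^{-1}(\infty)\neq\emptyset$ (i.e. $R=\frac{a_nw^n+\dots+a_0}{b_mw^m+\dots+b_0}$ with coprime numerator and denominator, $m\ge\max\{n,1\}$, $a_n,b_m,b_0\neq0$). *)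

theory Defs
  imports "HOL-Complex_Analysis.Complex_Analysis" "HOL-Computational_Algebra.Polynomial"
begin

text \<open>It is a meromorphic function; as a total HOL function its values
  at zeros of the derivative are junk, which is harmless since membership in the class R
  below is tested as equality of meromorphic functions, i.e. off a discrete set.\<close>
definition newton_map :: "(complex \<Rightarrow> complex) \<Rightarrow> complex \<Rightarrow> complex" where
  "newton_map F z = z - F z / deriv F z"

text \<open>The class R_l: f(z) = l z + R(exp(2 pi i z)) with R = p/q rational, p, q coprime,
  a_n, b_m, b_0 nonzero, m \<ge> max n 1. Equality is as meromorphic functions on C,
  i.e. outside a discrete (sparse) subset of C.\<close>
definition class_R :: "int \<Rightarrow> (complex \<Rightarrow> complex) \<Rightarrow> bool" where
  "class_R l f \<longleftrightarrow>
     (\<exists>p q :: complex poly.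
        coprime p q \<and> p \<noteq> 0 \<and> q \<noteq> 0 \<and> poly q 0 \<noteq> 0 \<and>
        degree q \<ge> max (degree p) 1 \<and>
        (\<forall>\<^sub>\<approx>z. f z = of_int l * z
                      + poly p (exp (2 * pi * \<i> * z)) / poly q (exp (2 * pi * \<i> * z))))"

end

(* Write w = exp (2 pi i z). If N_F is in R_l, then F/F' = (1 - l) z - p(w)/q(w) for a reduced
   fraction p/q, first off a discrete set and then everywhere. At a zero of F of multiplicity m
   the quotient F/F' has derivative 1/m. If l \<noteq> 1, the great Picard theorem applied near a pole b
   of p/q yields a zero z0 of F with exp (2 pi i z0) close to b, where the derivative of
   (1 - l) z - p(w)/q(w) is huge. Hence l = 1, and the same computation shows that
   -q(w)/(2 pi i w p(w)) has simple poles with positive integer residues at the nonzero roots of p;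
   a partial fraction decomposition then integrates F'/F = -q(w)/p(w) to the normal form, and the
   degree conditions on p/q turn into the conditions on \<Lambda>. Conversely, for F in normal form F/F'
   is an explicit rational function of w whose reduced form has the required degrees. *)

theory Submission
  imports Defs "HOL-Computational_Algebra.Fundamental_Theorem_Algebra"
    "HOL-Computational_Algebra.Polynomial_Factorial" "HOL-Computational_Algebra.Field_as_Ring"
begin

section \<open>Entire functions\<close>

lemma eq_if_eventually_cosparse_eq:
  fixes f g :: "'a::{perfect_space,t2_space} \<Rightarrow> 'b::t2_space"
  assumes "continuous_on UNIV f" "continuous_on UNIV g" "\<forall>\<^sub>\<approx>x. f x = g x"
  shows "f z = g z"
proof -
  have "\<forall>\<^sub>F x in at z. f x = g x"
    using assms(3) by (rule eventually_cosparse_imp_eventually_at) simp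
  moreover have "isCont f z" "isCont g z"
    using assms(1,2) by (simp_all add: continuous_on_eq_continuous_at)
  ultimately show ?thesis
    by (metis LIM_unique isCont_def tendsto_cong)
qed

lemma entire_eventually_cosparse_nonzero:
  fixes f :: "complex \<Rightarrow> complex"
  assumes "f holomorphic_on UNIV" "f z0 \<noteq> 0"
  shows "\<forall>\<^sub>\<approx>z. f z \<noteq> 0"
proof -
  have "f meromorphic_on UNIV"
    using assms(1) by (simp add: analytic_on_imp_meromorphic_on analytic_on_open)
  then have "(\<forall>\<^sub>\<approx>z. f z = 0) \<or> (\<forall>\<^sub>\<approx>z. f z \<noteq> 0)"
    using meromorphic_imp_constant_or_avoid[of f UNIV 0] by auto
  moreover have "\<not> (\<forall>\<^sub>\<approx>z. f z = 0)"
    using eq_if_eventually_cosparse_eq[of f "\<lambda>_. 0" z0] assms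
    by (auto simp: holomorphic_on_imp_continuous_on)
  ultimately show ?thesis by blast
qed

lemma eventually_cosparse_poly_exp_nonzero:
  fixes r :: "complex poly" and c :: complex
  assumes "r \<noteq> 0" "c \<noteq> 0"
  shows "\<forall>\<^sub>\<approx>z. poly r (exp (c * z)) \<noteq> 0"
proof -
  obtain w where w: "w \<notin> insert 0 {w. poly r w = 0}"
    using ex_new_if_finite[OF infinite_UNIV_char_0] poly_roots_finite[OF assms(1)] by blast
  then have "poly r (exp (c * (Ln w / c))) \<noteq> 0"
    using assms(2) by simp
  then show ?thesis
    by (intro entire_eventually_cosparse_nonzero holomorphic_intros)
qed

lemma eventually_at_poly_nonzero:
  fixes q :: "complex poly"
  assumes "q \<noteq> 0"
  shows "\<forall>\<^sub>F w in at b. poly q w \<noteq> 0"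
  using islimpt_finite[OF poly_roots_finite[OF assms], of b]
  by (simp add: islimpt_conv_frequently_at frequently_def)

lemma tendsto_unique_frequently:
  fixes f g :: "'a \<Rightarrow> 'b::real_normed_vector"
  assumes "(f \<longlongrightarrow> a) F" "(g \<longlongrightarrow> b) F" "\<exists>\<^sub>F x in F. f x = g x"
  shows "a = b"
proof (rule ccontr)
  assume "a \<noteq> b"
  have "((\<lambda>x. f x - g x) \<longlongrightarrow> a - b) F"
    using assms(1,2) by (rule tendsto_diff)
  then have "\<forall>\<^sub>F x in F. f x - g x \<noteq> 0"
    using \<open>a \<noteq> b\<close> by (intro tendsto_imp_eventually_ne) auto
  then show False
    using assms(3) by (auto simp: frequently_def elim: eventually_mono)
qed

lemma proportional_if_wronskian_zero:
  fixes F T :: "complex \<Rightarrow> complex"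
  assumes holF: "F holomorphic_on UNIV" and holT: "T holomorphic_on UNIV" and "T z1 \<noteq> 0"
    and wronskian: "\<And>z. deriv F z * T z = F z * deriv T z"
  shows "\<exists>\<kappa>. \<forall>z. F z = \<kappa> * T z"
proof -
  have "open {z. T z \<noteq> 0}"
    using holT by (simp add: open_Collect_neq holomorphic_on_imp_continuous_on)
  then obtain e where e: "e > 0" "ball z1 e \<subseteq> {z. T z \<noteq> 0}"
    using \<open>T z1 \<noteq> 0\<close> open_contains_ball by blast
  have "((\<lambda>z. F z / T z) has_field_derivative 0) (at x within ball z1 e)" if "x \<in> ball z1 e" for x
  proof -
    have "((\<lambda>z. F z / T z) has_field_derivative
            (deriv F x * T x - F x * deriv T x) / (T x * T x)) (at x)"
      using that e holF holT
      by (intro DERIV_divide holomorphic_derivI[of _ UNIV]) auto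
    then show ?thesis
      using wronskian[of x] by (simp add: has_field_derivative_at_within)
  qed
  then obtain \<kappa> where \<kappa>: "\<forall>x\<in>ball z1 e. F x / T x = \<kappa>"
    using has_field_derivative_zero_constant[OF convex_ball] by blast
  have "F z = \<kappa> * T z" for z
  proof (rule analytic_continuation_open[of "ball z1 e" UNIV F "\<lambda>z. \<kappa> * T z"])
    show "F z = \<kappa> * T z" if "z \<in> ball z1 e" for z
    proof -
      have "T z \<noteq> 0" "F z / T z = \<kappa>"
        using that \<kappa> e by auto
      then show ?thesis by (simp add: field_simps)
    qed
  qed (use e holF holT in \<open>auto intro!: holomorphic_intros\<close>)
  then show ?thesis by blast
qed

lemma deriv_zero_factorization:
  fixes F h :: "complex \<Rightarrow> complex"
  assumes holh: "h holomorphic_on ball z0 r"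
    and F_eq: "\<And>w. w \<in> ball z0 r \<Longrightarrow> F w = (w - z0) ^ Suc k * h w" and "w \<in> ball z0 r"
  shows "deriv F w = (w - z0) ^ k * (of_nat (Suc k) * h w + (w - z0) * deriv h w)"
proof -
  have "((\<lambda>w. (w - z0) ^ Suc k) has_field_derivative of_nat (Suc k) * (w - z0) ^ k) (at w)"
    by (rule derivative_eq_intros refl | simp)+
  from DERIV_mult[OF this holomorphic_derivI[OF holh open_ball \<open>w \<in> ball z0 r\<close>]]
  have "((\<lambda>w. (w - z0) ^ Suc k * h w) has_field_derivative
          (w - z0) ^ k * (of_nat (Suc k) * h w + (w - z0) * deriv h w)) (at w)"
    by (simp add: algebra_simps)
  then have "(F has_field_derivative (w - z0) ^ k * (of_nat (Suc k) * h w + (w - z0) * deriv h w)) (at w)"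
    by (rule has_field_derivative_transform_within_open[of _ _ _ "ball z0 r"]) (use assms in auto)
  then show ?thesis
    by (rule DERIV_imp_deriv)
qed

text \<open>Here g plays the role of F/F', and m is the multiplicity of the zero z0 of F.\<close>
lemma deriv_newton_quotient_at_zero:
  fixes F g :: "complex \<Rightarrow> complex"
  assumes holF: "F holomorphic_on UNIV" and "F z1 \<noteq> 0" and "F z0 = 0"
    and S: "open S" "z0 \<in> S" and holg: "g holomorphic_on S" and "g z0 = 0"
    and quotient: "\<And>z. z \<in> S \<Longrightarrow> F z = g z * deriv F z"
  shows "\<exists>m::nat. m > 0 \<and> of_nat m * deriv g z0 = 1"
proof -
  have "\<not> F constant_on UNIV"
    using \<open>F z0 = 0\<close> \<open>F z1 \<noteq> 0\<close> by (metis UNIV_I constant_on_def)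
  then obtain h r m where "0 < m" "0 < r" and holh: "h holomorphic_on ball z0 r"
    and F_eq: "\<And>w. w \<in> ball z0 r \<Longrightarrow> F w = (w - z0) ^ m * h w"
    and h_nonzero: "\<And>w. w \<in> ball z0 r \<Longrightarrow> h w \<noteq> 0"
    using holomorphic_factor_zero_nonconstant[OF holF open_UNIV connected_UNIV _ \<open>F z0 = 0\<close>]
    by (metis UNIV_I)
  obtain k where m: "m = Suc k"
    using \<open>0 < m\<close> gr0_implies_Suc by blast
  obtain r' where "0 < r'" "ball z0 r' \<subseteq> S \<inter> ball z0 r"
    using S \<open>0 < r\<close> open_contains_ball[of "S \<inter> ball z0 r"] by (metis centre_in_ball open_Int open_ball IntI)
  have h_eq: "h w = g w / (w - z0) * (of_nat m * h w + (w - z0) * deriv h w)"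
    if "w \<in> ball z0 r'" "w \<noteq> z0" for w
  proof -
    have w: "w \<in> S" "w \<in> ball z0 r"
      using that \<open>ball z0 r' \<subseteq> S \<inter> ball z0 r\<close> by auto
    have "(w - z0) ^ k * ((w - z0) * h w) = g w * deriv F w"
      using F_eq[OF w(2)] quotient[OF w(1)] unfolding m by (simp add: ac_simps)
    also have "\<dots> = (w - z0) ^ k * (g w * (of_nat m * h w + (w - z0) * deriv h w))"
      by (subst deriv_zero_factorization[OF holh F_eq[unfolded m] w(2)]) (simp_all add: m ac_simps)
    finally have "(w - z0) ^ k * ((w - z0) * h w) =
               (w - z0) ^ k * (g w * (of_nat m * h w + (w - z0) * deriv h w))" .
    then have "(w - z0) * h w = g w * (of_nat m * h w + (w - z0) * deriv h w)"
      using that(2) by simp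
    then show ?thesis
      using that(2) by (simp add: field_simps)
  qed
  have "((\<lambda>w. g w / (w - z0)) \<longlongrightarrow> deriv g z0) (at z0)"
    using holomorphic_derivI[OF holg S] \<open>g z0 = 0\<close> by (simp add: has_field_derivative_iff)
  moreover have "isCont h z0" "isCont (deriv h) z0"
    using holh holomorphic_deriv[OF holh open_ball] \<open>0 < r\<close>
    by (meson centre_in_ball continuous_on_eq_continuous_at holomorphic_on_imp_continuous_on open_ball)+
  ultimately have lim: "((\<lambda>w. g w / (w - z0) * (of_nat m * h w + (w - z0) * deriv h w)) \<longlongrightarrow>
                     deriv g z0 * (of_nat m * h z0 + (z0 - z0) * deriv h z0)) (at z0)"
    by (intro tendsto_intros) (auto simp: isCont_def)
  have "\<forall>\<^sub>F w in at z0. h w = g w / (w - z0) * (of_nat m * h w + (w - z0) * deriv h w)"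
    unfolding eventually_at using \<open>0 < r'\<close> h_eq by (auto simp: dist_commute intro!: exI[of _ r'])
  from tendsto_cong[OF this] lim have "(h \<longlongrightarrow> deriv g z0 * (of_nat m * h z0 + (z0 - z0) * deriv h z0)) (at z0)"
    by blast
  then have "h z0 * (of_nat m * deriv g z0 - 1) = 0"
    using \<open>isCont h z0\<close> LIM_unique by (fastforce simp: isCont_def algebra_simps)
  then have "of_nat m * deriv g z0 = 1"
    using h_nonzero[of z0] \<open>0 < r\<close> by simp
  then show ?thesis
    using \<open>0 < m\<close> by blast
qed

lemma norm_deriv_newton_quotient_at_zero_le:
  fixes F g :: "complex \<Rightarrow> complex"
  assumes "F holomorphic_on UNIV" "F z1 \<noteq> 0" "F z0 = 0" "open S" "z0 \<in> S" "g holomorphic_on S" "g z0 = 0"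
    and "\<And>z. z \<in> S \<Longrightarrow> F z = g z * deriv F z"
  shows "norm (deriv g z0) \<le> 1"
proof -
  obtain m :: nat where "m > 0" "of_nat m * deriv g z0 = 1"
    using deriv_newton_quotient_at_zero[OF assms] by blast
  then have "of_nat m * norm (deriv g z0) = 1"
    by (metis norm_mult norm_of_nat norm_one)
  moreover have "1 * norm (deriv g z0) \<le> of_nat m * norm (deriv g z0)"
    using \<open>m > 0\<close> by (intro mult_right_mono) auto
  ultimately show ?thesis
    by simp
qed

lemma entire_deriv_eventually_cosparse_nonzero:
  fixes F :: "complex \<Rightarrow> complex"
  assumes holF: "F holomorphic_on UNIV" and "F z0 \<noteq> F z1"
  shows "\<forall>\<^sub>\<approx>z. deriv F z \<noteq> 0"
proof -
  have "\<exists>z. deriv F z \<noteq> 0"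
  proof (rule ccontr)
    assume "\<not> (\<exists>z. deriv F z \<noteq> 0)"
    then have "(F has_field_derivative 0) (at z within UNIV)" for z
      using holomorphic_derivI[OF holF open_UNIV, of z] by simp
    then obtain c where "\<forall>x\<in>UNIV. F x = c"
      using has_field_derivative_zero_constant[OF convex_UNIV] by blast
    then show False
      using \<open>F z0 \<noteq> F z1\<close> by simp
  qed
  then show ?thesis
    using entire_eventually_cosparse_nonzero[OF holomorphic_deriv[OF holF open_UNIV]] by blast
qed

section \<open>Polynomials\<close>

lemma surj_pderiv: "surj (pderiv :: 'a::field_char_0 poly \<Rightarrow> 'a poly)"
proof (rule surjI)
  fix Y :: "'a poly"
  have "pderiv (\<Sum>i\<le>degree Y. monom (coeff Y i / of_nat (Suc i)) (Suc i)) =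
        (\<Sum>i\<le>degree Y. pderiv (monom (coeff Y i / of_nat (Suc i)) (Suc i)))"
    using higher_pderiv_sum[of 1] by simp
  also have "\<dots> = (\<Sum>i\<le>degree Y. monom (coeff Y i) i)"
    by (intro sum.cong refl) (simp add: pderiv_monom del: of_nat_Suc)
  also have "\<dots> = Y"
    by (rule poly_as_sum_of_monoms)
  finally show "pderiv (\<Sum>i\<le>degree Y. monom (coeff Y i / of_nat (Suc i)) (Suc i)) = Y" .
qed

lemma poly_dvd_if_simple_roots:
  fixes p N :: "complex poly"
  assumes "p \<noteq> 0" "\<And>a. poly p a = 0 \<Longrightarrow> poly N a = 0 \<and> poly (pderiv p) a \<noteq> 0"
  shows "p dvd N"
  using assms
proof (induction "degree p" arbitrary: p N rule: less_induct)
  case (less p N)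
  show ?case
  proof (cases "\<exists>a. poly p a = 0")
    case False
    then have "degree p = 0"
      using fundamental_theorem_of_algebra constant_degree by blast
    then show ?thesis
      using less.prems(1) by (metis degree_eq_zeroE const_poly_dvd_iff dvd_field_iff pCons_eq_0_iff)
  next
    case True
    then obtain a where a: "poly p a = 0" by blast
    then obtain p2 where p2: "p = [:-a,1:] * p2"
      using poly_eq_0_iff_dvd by (metis dvdE)
    obtain N2 where N2: "N = [:-a,1:] * N2"
      using less.prems(2)[OF a] poly_eq_0_iff_dvd by (metis dvdE)
    have "p2 \<noteq> 0"
      using p2 less.prems(1) by auto
    have pderiv_p: "pderiv p = [:-a,1:] * pderiv p2 + p2"
      unfolding p2 pderiv_mult by (simp add: pderiv_pCons)
    have "p2 dvd N2"
    proof (rule less.hyps)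
      show "degree p2 < degree p"
        unfolding p2 using \<open>p2 \<noteq> 0\<close> degree_mult_eq[of "[:-a,1:]" p2] by (simp del: mult_pCons_left)
      fix b assume b: "poly p2 b = 0"
      then have "b \<noteq> a"
        using less.prems(2)[OF a] pderiv_p by auto
      moreover have "poly p b = 0"
        unfolding p2 using b by simp
      then have "poly N b = 0" "poly (pderiv p) b \<noteq> 0"
        using less.prems(2) by auto
      with \<open>b \<noteq> a\<close> show "poly N2 b = 0 \<and> poly (pderiv p2) b \<noteq> 0"
        unfolding N2 pderiv_p using b by auto
    qed fact
    then show ?thesis
      unfolding p2 N2 by (rule mult_dvd_mono[OF dvd_refl])
  qed
qed

lemma poly_pderiv_prod_linear_powers:
  fixes Z :: "'a::field set" and m :: "'a \<Rightarrow> nat"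
  assumes "finite Z" "w \<notin> Z"
  shows "poly (pderiv (\<Prod>a\<in>Z. [:-a,1:] ^ m a)) w =
         poly (\<Prod>a\<in>Z. [:-a,1:] ^ m a) w * (\<Sum>a\<in>Z. of_nat (m a) / (w - a))"
  using assms
proof (induction Z rule: finite_induct)
  case (insert a Z)
  have "w - a \<noteq> 0"
    using insert.prems by auto
  have "poly (pderiv ([:-a,1:] ^ m a)) w = of_nat (m a) * (w - a) ^ m a / (w - a)"
  proof (cases "m a")
    case (Suc k)
    have "poly (pderiv ([:-a,1:] ^ Suc k)) w = of_nat (Suc k) * (w - a) ^ k"
      by (simp add: pderiv_power_Suc pderiv_pCons del: power_Suc)
    then show ?thesis
      using \<open>w - a \<noteq> 0\<close> Suc by simp
  qed simp
  then show ?case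
    using insert \<open>w - a \<noteq> 0\<close> by (simp add: pderiv_mult algebra_simps add_divide_distrib)
qed simp

text \<open>The principal part of the Laurent polynomial M(w)/w^s is
  (1/w) * poly (principal_part_poly s M) (1/w).\<close>
primrec principal_part_poly :: "nat \<Rightarrow> 'a::zero poly \<Rightarrow> 'a poly" where
  "principal_part_poly 0 M = 0"
| "principal_part_poly (Suc s) M = pCons (coeff M s) (principal_part_poly s M)"

lemma principal_part_poly_eq_0_iff:
  "principal_part_poly s M = 0 \<longleftrightarrow> (\<forall>j<s. coeff M j = 0)"
  by (induction s) (auto simp: less_Suc_eq)

lemma poly_shift_Suc_eq_pCons:
  "poly_shift n M = pCons (coeff M n) (poly_shift (Suc n) M)"
  by (rule poly_eqI) (auto simp: coeff_poly_shift coeff_pCons split: nat.split)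

lemma poly_div_power_laurent:
  fixes M :: "'a::field poly"
  assumes "w \<noteq> 0"
  shows "poly M w / w ^ s = coeff M s + w * poly (poly_shift (Suc s) M) w
           + inverse w * poly (principal_part_poly s M) (inverse w)"
proof (induction s)
  case 0
  show ?case
    using arg_cong[OF poly_shift_Suc_eq_pCons[of 0 M], of "\<lambda>r. poly r w"] by simp
next
  case (Suc s)
  have "poly M w / w ^ Suc s = inverse w * (poly M w / w ^ s)"
    by (simp add: field_simps)
  also have "\<dots> = coeff M (Suc s) + w * poly (poly_shift (Suc (Suc s)) M) w
      + inverse w * poly (principal_part_poly (Suc s) M) (inverse w)"
    unfolding Suc poly_shift_Suc_eq_pCons[of "Suc s" M] using assms
    by (simp add: field_simps)
  finally show ?case .
qed

lemma exists_reduced_fraction: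
  fixes A B :: "complex poly"
  assumes "B \<noteq> 0" "poly A 0 \<noteq> 0" "degree B \<le> degree A" "\<not> B dvd A"
  obtains p q where "coprime p q" "p \<noteq> 0" "q \<noteq> 0" "poly q 0 \<noteq> 0"
    "max (degree p) 1 \<le> degree q" "B * q = p * A"
proof -
  define G where "G = gcd B A"
  define p where "p = B div G"
  define q where "q = A div G"
  have "A \<noteq> 0"
    using assms(2) by auto
  have "G \<noteq> 0"
    unfolding G_def using \<open>B \<noteq> 0\<close> by simp
  have B_eq: "B = p * G" and A_eq: "A = q * G"
    unfolding p_def q_def G_def by simp_all
  have "p \<noteq> 0" "q \<noteq> 0"
    using B_eq A_eq \<open>B \<noteq> 0\<close> \<open>A \<noteq> 0\<close> by auto
  have "coprime p q"
    unfolding p_def q_def G_def using div_gcd_coprime[of B A] \<open>B \<noteq> 0\<close> by simp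
  have "poly q 0 \<noteq> 0"
    using assms(2) A_eq by auto
  have "degree p \<le> degree q"
    using assms(3) B_eq A_eq \<open>p \<noteq> 0\<close> \<open>q \<noteq> 0\<close> \<open>G \<noteq> 0\<close> by (simp add: degree_mult_eq)
  have "B * q = p * A"
    unfolding B_eq A_eq by (simp add: algebra_simps)
  have "degree q \<noteq> 0"
  proof
    assume "degree q = 0"
    then have "is_unit q"
      using \<open>q \<noteq> 0\<close> by (metis degree_eq_zeroE is_unit_const_poly_iff pCons_eq_0_iff dvd_field_iff)
    then have "A dvd B"
      unfolding A_eq B_eq by (simp add: unit_imp_dvd)
    then obtain r where r: "B = A * r" ..
    then have "r \<noteq> 0" "degree r = 0"
      using \<open>B \<noteq> 0\<close> \<open>A \<noteq> 0\<close> assms(3) by (auto simp: degree_mult_eq)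
    then have "is_unit r"
      by (metis degree_eq_zeroE is_unit_const_poly_iff pCons_eq_0_iff dvd_field_iff)
    then show False
      using assms(4) r by (simp add: mult_unit_dvd_iff)
  qed
  show ?thesis
    using \<open>degree p \<le> degree q\<close> \<open>degree q \<noteq> 0\<close>
    by (intro that[OF \<open>coprime p q\<close> \<open>p \<noteq> 0\<close> \<open>q \<noteq> 0\<close> \<open>poly q 0 \<noteq> 0\<close> _ \<open>B * q = p * A\<close>]) auto
qed

lemma coeff_mult_degree_le_sum:
  fixes p q :: "'a::{comm_semiring_0,semiring_no_zero_divisors} poly"
  assumes "degree q \<le> n"
  shows "coeff (p * q) (degree p + n) = lead_coeff p * coeff q n"
proof (cases "degree q = n")
  case True
  then show ?thesis
    using coeff_mult_degree_sum[of p q] by simp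
next
  case False
  then have "degree q < n"
    using assms by simp
  then have "coeff q n = 0" "degree (p * q) < degree p + n"
    using degree_mult_le[of p q] by (auto simp: coeff_eq_0)
  then show ?thesis
    by (simp add: coeff_eq_0)
qed

lemma coeff_top_pderiv_add_pderiv_mult:
  fixes P Q :: "complex poly"
  assumes "1 \<le> degree P"
  shows "coeff (pderiv P + pderiv Q * P) (degree P + degree Q - 1) =
    (if degree Q = 0 then of_nat (degree P) else of_nat (degree Q) * lead_coeff Q) * lead_coeff P"
proof -
  define n d where "n = degree P" and "d = degree Q"
  have "P \<noteq> 0"
    using assms by auto
  have "coeff (pderiv P + pderiv Q * P) (n + d - 1) =
      (if d = 0 then of_nat n else of_nat d * lead_coeff Q) * lead_coeff P"
  proof (cases "d = 0")
    case True
    then have "pderiv Q = 0"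
      by (simp add: d_def pderiv_eq_0_iff)
    then show ?thesis
      using True assms by (simp add: n_def coeff_pderiv)
  next
    case False
    then have "pderiv Q \<noteq> 0" "degree (pderiv Q) = d - 1"
      by (simp_all add: d_def pderiv_eq_0_iff degree_pderiv)
    moreover have "degree (pderiv Q * P) = n + d - 1"
      using False \<open>P \<noteq> 0\<close> calculation by (simp add: degree_mult_eq n_def)
    ultimately have "coeff (pderiv Q * P) (n + d - 1) = lead_coeff (pderiv Q) * lead_coeff P"
      by (metis lead_coeff_mult)
    moreover have "coeff (pderiv P) (n + d - 1) = 0"
      using False assms by (intro coeff_eq_0) (simp add: degree_pderiv n_def)
    ultimately show ?thesis
      using False \<open>degree (pderiv Q) = d - 1\<close> by (simp add: coeff_pderiv d_def)
  qed
  then show ?thesis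
    by (simp add: n_def d_def)
qed

section \<open>Newton maps of the normal form\<close>

definition periodic_form ::
    "complex \<Rightarrow> complex poly \<Rightarrow> complex poly \<Rightarrow> complex poly \<Rightarrow> complex \<Rightarrow> complex" where
  "periodic_form L P Q Qt z =
     exp (L * z + poly Q (exp (2 * pi * \<i> * z)) + poly Qt (exp (- (2 * pi * \<i> * z))))
       * poly P (exp (2 * pi * \<i> * z))"

lemma normal_form_eq_periodic_form:
  "exp (\<Lambda> * z) *
     (let w = exp (2 * pi * \<i> * z) in w powi m0 * poly P w * exp (poly Q w + poly Qt (1 / w))) =
   periodic_form (\<Lambda> + 2 * pi * \<i> * of_int m0) P Q Qt z"
proof -
  have "exp (2 * pi * \<i> * z) powi m0 = exp (of_int m0 * (2 * pi * \<i> * z))"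
    by (rule exp_power_int)
  moreover have "1 / exp (2 * pi * \<i> * z) = exp (- (2 * pi * \<i> * z))"
    by (simp add: exp_minus field_simps)
  ultimately show ?thesis
    unfolding periodic_form_def Let_def by (simp add: exp_add[symmetric] algebra_simps)
qed

lemma mult_periodic_form:
  assumes "c \<noteq> 0"
  shows "c * periodic_form L P Q Qt z = periodic_form L P (Q + [:Ln c:]) Qt z"
  using assms by (simp add: periodic_form_def exp_add)

lemma holomorphic_periodic_form: "periodic_form L P Q Qt holomorphic_on UNIV"
  unfolding periodic_form_def by (intro holomorphic_intros)

lemma periodic_form_eq_0_iff: "periodic_form L P Q Qt z = 0 \<longleftrightarrow> poly P (exp (2 * pi * \<i> * z)) = 0"
  by (simp add: periodic_form_def)

lemma has_field_derivative_periodic_form: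
  fixes z :: complex
  defines "w \<equiv> exp (2 * pi * \<i> * z)"
  shows "(periodic_form L P Q Qt has_field_derivative
     exp (L * z + poly Q w + poly Qt (inverse w)) *
     ((L + 2 * pi * \<i> * (w * poly (pderiv Q) w - inverse w * poly (pderiv Qt) (inverse w))) * poly P w
      + 2 * pi * \<i> * w * poly (pderiv P) w)) (at z)"
  unfolding periodic_form_def w_def
  by ((rule derivative_eq_intros refl poly_DERIV[THEN DERIV_chain2] | simp)+, simp add: exp_minus algebra_simps)

text \<open>For F = periodic_form L P Q Qt and w = exp (2 pi i z), the value of
  newton_denominator (2 pi i) L P Q Qt at w is w^(degree Qt) * P(w) * F'(z)/F(z).\<close>
definition newton_denominator ::
    "complex \<Rightarrow> complex \<Rightarrow> complex poly \<Rightarrow> complex poly \<Rightarrow> complex poly \<Rightarrow> complex poly" where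
  "newton_denominator \<omega> L P Q Qt =
     smult L (monom 1 (degree Qt) * P)
     + smult \<omega> (monom 1 (Suc (degree Qt)) * (pderiv P + pderiv Q * P))
     - smult \<omega> (P * reflect_poly (pderiv Qt))"

lemma poly_reflect_pderiv:
  fixes Qt :: "'a::field_char_0 poly"
  assumes "w \<noteq> 0"
  shows "poly (reflect_poly (pderiv Qt)) w = w ^ degree Qt * inverse w * poly (pderiv Qt) (inverse w)"
proof (cases "degree Qt")
  case 0
  then have "pderiv Qt = 0"
    by (simp add: pderiv_eq_0_iff)
  then show ?thesis by simp
next
  case (Suc k)
  then show ?thesis
    using poly_reflect_poly_nz[OF assms, of "pderiv Qt"] assms by (simp add: degree_pderiv)
qed

lemma deriv_periodic_form:
  fixes z :: complex
  defines "w \<equiv> exp (2 * pi * \<i> * z)"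
  shows "deriv (periodic_form L P Q Qt) z * w ^ degree Qt =
    exp (L * z + poly Q w + poly Qt (inverse w)) * poly (newton_denominator (2 * pi * \<i>) L P Q Qt) w"
proof -
  have "w \<noteq> 0"
    unfolding w_def by simp
  show ?thesis
    unfolding DERIV_imp_deriv[OF has_field_derivative_periodic_form] w_def[symmetric]
    using poly_reflect_pderiv[OF \<open>w \<noteq> 0\<close>, of Qt] \<open>w \<noteq> 0\<close>
    by (simp add: newton_denominator_def poly_monom algebra_simps)
qed

lemma periodic_form_div_deriv:
  fixes z :: complex
  defines "w \<equiv> exp (2 * pi * \<i> * z)"
  assumes "poly (newton_denominator (2 * pi * \<i>) L P Q Qt) w \<noteq> 0"
  shows "periodic_form L P Q Qt z / deriv (periodic_form L P Q Qt) z =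
    poly (monom 1 (degree Qt) * P) w / poly (newton_denominator (2 * pi * \<i>) L P Q Qt) w"
proof -
  have "w \<noteq> 0"
    unfolding w_def by simp
  then have "deriv (periodic_form L P Q Qt) z =
      exp (L * z + poly Q w + poly Qt (inverse w)) * poly (newton_denominator (2 * pi * \<i>) L P Q Qt) w
        / w ^ degree Qt"
    using deriv_periodic_form[of L P Q Qt z] unfolding w_def[symmetric] by (simp add: eq_divide_eq)
  moreover have "periodic_form L P Q Qt z = exp (L * z + poly Q w + poly Qt (inverse w)) * poly P w"
    by (simp add: periodic_form_def w_def exp_minus)
  ultimately show ?thesis
    using assms(2) \<open>w \<noteq> 0\<close> by (simp only:) (simp add: poly_monom field_simps)
qed

lemma poly_newton_denominator_0:
  assumes "\<omega> \<noteq> 0" "poly P 0 \<noteq> 0" "degree Qt = 0 \<Longrightarrow> L \<noteq> 0"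
  shows "poly (newton_denominator \<omega> L P Q Qt) 0 \<noteq> 0"
proof (cases "degree Qt = 0")
  case True
  then have "pderiv Qt = 0"
    by (simp add: pderiv_eq_0_iff)
  then show ?thesis
    using assms True by (simp add: newton_denominator_def poly_monom)
next
  case False
  then have "pderiv Qt \<noteq> 0"
    by (simp add: pderiv_eq_0_iff)
  moreover have "poly (newton_denominator \<omega> L P Q Qt) 0 = - (\<omega> * (poly P 0 * lead_coeff (pderiv Qt)))"
    using False by (simp add: newton_denominator_def poly_0_coeff_0 coeff_monom_mult coeff_mult_0)
  ultimately show ?thesis
    using assms(1,2) by simp
qed

lemma degree_newton_denominator:
  fixes \<omega> L :: complex and P Q Qt :: "complex poly"
  assumes "\<omega> \<noteq> 0" "1 \<le> degree P" "degree Q = 0 \<Longrightarrow> L + \<omega> * of_nat (degree P) \<noteq> 0"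
  shows "degree Qt + degree P \<le> degree (newton_denominator \<omega> L P Q Qt)"
proof -
  define k n d where "k = degree Qt" and "n = degree P" and "d = degree Q"
  have "P \<noteq> 0"
    using assms(2) by auto
  have top_pderiv: "coeff (pderiv P + pderiv Q * P) (n + d - 1) =
      (if d = 0 then of_nat n else of_nat d * lead_coeff Q) * lead_coeff P"
    unfolding n_def d_def by (rule coeff_top_pderiv_add_pderiv_mult[OF assms(2)])
  have top_reflect: "coeff (P * reflect_poly (pderiv Qt)) (k + n + d) = 0"
  proof (cases "k = 0")
    case False
    have "degree (P * reflect_poly (pderiv Qt)) \<le> n + degree (pderiv Qt)"
      unfolding n_def using degree_mult_le[of P] degree_reflect_poly_le[of "pderiv Qt"] by (meson add_left_mono order_trans)
    also have "\<dots> < k + n + d"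
      using False by (simp add: k_def degree_pderiv)
    finally show ?thesis
      by (rule coeff_eq_0)
  next
    case True
    then have "pderiv Qt = 0"
      by (simp add: k_def pderiv_eq_0_iff)
    then show ?thesis
      by simp
  qed
  have "coeff (newton_denominator \<omega> L P Q Qt) (k + n + d) =
      (if d = 0 then L + \<omega> * of_nat n else \<omega> * of_nat d * lead_coeff Q) * lead_coeff P"
  proof -
    have "coeff (monom 1 k * P) (k + n + d) = (if d = 0 then lead_coeff P else 0)"
      by (simp add: coeff_monom_mult n_def coeff_eq_0 add.assoc)
    moreover have "coeff (monom 1 (Suc k) * (pderiv P + pderiv Q * P)) (k + n + d) =
        coeff (pderiv P + pderiv Q * P) (n + d - 1)"
      using assms(2) by (simp add: coeff_monom_mult n_def)
    ultimately show ?thesis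
      using top_pderiv top_reflect by (simp add: newton_denominator_def k_def algebra_simps)
  qed
  moreover have "(if d = 0 then L + \<omega> * of_nat n else \<omega> * of_nat d * lead_coeff Q) \<noteq> 0"
    using assms(1,3) by (auto simp: d_def n_def)
  ultimately have "coeff (newton_denominator \<omega> L P Q Qt) (k + n + d) \<noteq> 0"
    using \<open>P \<noteq> 0\<close> by simp
  then have "k + n + d \<le> degree (newton_denominator \<omega> L P Q Qt)"
    by (rule le_degree)
  then show ?thesis
    by (simp add: k_def n_def)
qed

lemma newton_denominator_not_dvd:
  fixes \<omega> L :: complex and P Q Qt :: "complex poly"
  assumes "\<omega> \<noteq> 0" "poly P 0 \<noteq> 0" "1 \<le> degree P"
  shows "\<not> monom 1 (degree Qt) * P dvd newton_denominator \<omega> L P Q Qt"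
proof
  define k where "k = degree Qt"
  assume "monom 1 (degree Qt) * P dvd newton_denominator \<omega> L P Q Qt"
  then have "P dvd newton_denominator \<omega> L P Q Qt"
    using dvd_mult_right by blast
  then have "P dvd newton_denominator \<omega> L P Q Qt - smult L (monom 1 k * P)
      - smult \<omega> (monom 1 (Suc k) * (pderiv Q * P)) + smult \<omega> (P * reflect_poly (pderiv Qt))"
    by (intro dvd_add dvd_diff dvd_smult dvd_mult dvd_mult2 dvd_refl)
  also have "\<dots> = smult \<omega> (monom 1 (Suc k) * pderiv P)"
    by (simp add: newton_denominator_def k_def smult_add_right algebra_simps)
  finally have "P dvd [:0,1:] ^ Suc k * pderiv P"
    using assms(1) by (simp add: monom_altdef dvd_smult_cancel)
  moreover have "coprime P ([:0,1:] ^ Suc k)"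
  proof -
    have "prime_elem [:0::complex,1:]"
      by (rule prime_elem_linear_field_poly) simp
    moreover have "\<not> [:0,1:] dvd P"
      using assms(2) poly_eq_0_iff_dvd[of P 0] by simp
    ultimately show ?thesis
      by (metis prime_elem_imp_coprime coprime_power_right_iff coprime_commute)
  qed
  ultimately have "P dvd pderiv P"
    using coprime_dvd_mult_right_iff by blast
  moreover have "pderiv P \<noteq> 0"
    using assms(3) by (simp add: pderiv_eq_0_iff)
  ultimately show False
    using assms(3) dvd_imp_degree_le[of P "pderiv P"] by (simp add: degree_pderiv)
qed

lemma class_R_1_newton_map_if_quotient:
  fixes F :: "complex \<Rightarrow> complex" and A B :: "complex poly"
  assumes "B \<noteq> 0" "poly A 0 \<noteq> 0" "degree B \<le> degree A" "\<not> B dvd A"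
    and quotient: "\<And>z. poly A (exp (2 * pi * \<i> * z)) \<noteq> 0 \<Longrightarrow>
      F z / deriv F z = poly B (exp (2 * pi * \<i> * z)) / poly A (exp (2 * pi * \<i> * z))"
  shows "class_R 1 (newton_map F)"
proof -
  obtain p q where pq: "coprime p q" "p \<noteq> 0" "q \<noteq> 0" "poly q 0 \<noteq> 0"
      "max (degree p) 1 \<le> degree q" and Bq: "B * q = p * A"
    using exists_reduced_fraction[OF assms(1-4)] .
  have "A \<noteq> 0"
    using assms(2) by auto
  have "\<forall>\<^sub>\<approx>z. poly A (exp (2 * pi * \<i> * z)) \<noteq> 0 \<and> poly q (exp (2 * pi * \<i> * z)) \<noteq> 0"
    using \<open>A \<noteq> 0\<close> \<open>q \<noteq> 0\<close> by (intro eventually_conj eventually_cosparse_poly_exp_nonzero) auto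
  then have "\<forall>\<^sub>\<approx>z. newton_map F z =
      of_int 1 * z + poly (- p) (exp (2 * pi * \<i> * z)) / poly q (exp (2 * pi * \<i> * z))"
  proof (rule eventually_mono)
    fix z
    define w where "w = exp (2 * pi * \<i> * z)"
    assume "poly A (exp (2 * pi * \<i> * z)) \<noteq> 0 \<and> poly q (exp (2 * pi * \<i> * z)) \<noteq> 0"
    then have "poly A w \<noteq> 0" "poly q w \<noteq> 0"
      unfolding w_def by auto
    moreover have "poly B w * poly q w = poly p w * poly A w"
      using arg_cong[OF Bq, of "\<lambda>r. poly r w"] by simp
    ultimately have "poly B w / poly A w = poly p w / poly q w"
      by (metis frac_eq_eq)
    then have "F z / deriv F z = poly p w / poly q w"
      using quotient[of z] \<open>poly A w \<noteq> 0\<close> unfolding w_def[symmetric] by simp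
    then show "newton_map F z = of_int 1 * z + poly (- p) w / poly q w"
      by (simp add: newton_map_def)
  qed
  then show ?thesis
    unfolding class_R_def using pq by (intro exI[of _ "- p"] exI[of _ q]) auto
qed

lemma class_R_newton_map_periodic_form:
  assumes "poly P 0 \<noteq> 0" "poly P a = 0" "degree Qt = 0 \<Longrightarrow> L \<noteq> 0"
    and "degree Q = 0 \<Longrightarrow> L + 2 * pi * \<i> * of_nat (degree P) \<noteq> 0"
  shows "class_R 1 (newton_map (periodic_form L P Q Qt))"
proof (rule class_R_1_newton_map_if_quotient)
  have "1 \<le> degree P"
    using assms(1,2) by (metis degree_eq_zeroE less_one not_le poly_const_conv)
  moreover have "degree (monom 1 (degree Qt) * P) = degree Qt + degree P"
    using assms(1) by (subst degree_mult_eq) (auto simp: degree_monom_eq)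
  ultimately show "degree (monom 1 (degree Qt) * P) \<le> degree (newton_denominator (2 * pi * \<i>) L P Q Qt)"
    using degree_newton_denominator[of "2 * pi * \<i>" P Q L Qt] assms(4) by simp
  show "\<not> monom 1 (degree Qt) * P dvd newton_denominator (2 * pi * \<i>) L P Q Qt"
    using \<open>1 \<le> degree P\<close> assms(1) by (intro newton_denominator_not_dvd) auto
  show "monom 1 (degree Qt) * P \<noteq> 0"
    using assms(1) by (auto simp: monom_eq_0_iff)
  show "poly (newton_denominator (2 * pi * \<i>) L P Q Qt) 0 \<noteq> 0"
    using assms(1,3) by (intro poly_newton_denominator_0) auto
qed (rule periodic_form_div_deriv)

lemma class_R_newton_map_normal_form:
  fixes \<Lambda> :: complex and m0 :: int and P Q Qt :: "complex poly"
  assumes "poly P 0 \<noteq> 0" "poly P w = 0"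
    and "degree Q = 0 \<longrightarrow> \<Lambda> \<noteq> - 2 * pi * \<i> * (of_int m0 + of_nat (degree P))"
    and "degree Qt = 0 \<longrightarrow> \<Lambda> \<noteq> - 2 * pi * \<i> * of_int m0"
    and "\<forall>z. F z = exp (\<Lambda> * z) *
           (let w = exp (2 * pi * \<i> * z) in w powi m0 * poly P w * exp (poly Q w + poly Qt (1 / w)))"
  shows "class_R 1 (newton_map F)"
proof -
  have "F = periodic_form (\<Lambda> + 2 * pi * \<i> * of_int m0) P Q Qt"
    using assms(5) normal_form_eq_periodic_form by auto
  moreover have "class_R 1 (newton_map (periodic_form (\<Lambda> + 2 * pi * \<i> * of_int m0) P Q Qt))"
    using assms(1-4) by (intro class_R_newton_map_periodic_form) (auto simp: algebra_simps eq_neg_iff_add_eq_0)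
  ultimately show ?thesis
    by simp
qed

section \<open>The Newton identity forces l = 1\<close>

lemma newton_identity_of_class_R:
  fixes F :: "complex \<Rightarrow> complex" and l :: int
  assumes holF: "F holomorphic_on UNIV" and "F z0 \<noteq> F z1" and "class_R l (newton_map F)"
  obtains p q :: "complex poly"
  where "coprime p q" "p \<noteq> 0" "q \<noteq> 0" "poly q 0 \<noteq> 0" "max (degree p) 1 \<le> degree q"
    and "\<And>z. poly q (exp (2 * pi * \<i> * z)) * F z =
           ((1 - of_int l) * z * poly q (exp (2 * pi * \<i> * z)) - poly p (exp (2 * pi * \<i> * z)))
             * deriv F z"
proof -
  obtain p q :: "complex poly"
    where pq: "coprime p q" "p \<noteq> 0" "q \<noteq> 0" "poly q 0 \<noteq> 0" "max (degree p) 1 \<le> degree q"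
      and newton: "\<forall>\<^sub>\<approx>z. newton_map F z =
        of_int l * z + poly p (exp (2 * pi * \<i> * z)) / poly q (exp (2 * pi * \<i> * z))"
    using assms(3) unfolding class_R_def by blast
  have holF': "deriv F holomorphic_on UNIV"
    using holF by (rule holomorphic_deriv[OF _ open_UNIV])
  have "\<forall>\<^sub>\<approx>z. deriv F z \<noteq> 0"
    using entire_deriv_eventually_cosparse_nonzero[OF holF \<open>F z0 \<noteq> F z1\<close>] .
  moreover have "\<forall>\<^sub>\<approx>z. poly q (exp (2 * pi * \<i> * z)) \<noteq> 0"
    using pq(3) by (intro eventually_cosparse_poly_exp_nonzero) auto
  ultimately have "\<forall>\<^sub>\<approx>z. poly q (exp (2 * pi * \<i> * z)) * F z =
      ((1 - of_int l) * z * poly q (exp (2 * pi * \<i> * z)) - poly p (exp (2 * pi * \<i> * z))) * deriv F z"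
    using newton
  proof eventually_elim
    case (elim z)
    then have "F z / deriv F z = (1 - of_int l) * z - poly p (exp (2 * pi * \<i> * z)) / poly q (exp (2 * pi * \<i> * z))"
      by (simp add: newton_map_def algebra_simps)
    with elim(1,2) show ?case
      by (simp add: field_simps)
  qed
  then have "poly q (exp (2 * pi * \<i> * z)) * F z =
      ((1 - of_int l) * z * poly q (exp (2 * pi * \<i> * z)) - poly p (exp (2 * pi * \<i> * z))) * deriv F z"
    for z
    by (rule eq_if_eventually_cosparse_eq[rotated 2])
      (intro holomorphic_on_imp_continuous_on holomorphic_intros holF holF')+
  then show ?thesis
    by (rule that[OF pq])
qed

lemma is_pole_deriv_poly_quotient:
  fixes p q :: "complex poly"
  assumes "q \<noteq> 0" "poly q b = 0" "poly p b \<noteq> 0"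
  shows "is_pole (deriv (\<lambda>w. poly p w / poly q w)) b"
proof (rule is_pole_deriv)
  have "filterlim (poly q) (at 0) (at b)"
    using poly_isCont[of b q] eventually_at_poly_nonzero[OF assms(1)] assms(2)
    by (intro filterlim_atI) (auto simp: isCont_def)
  then show "is_pole (\<lambda>w. poly p w / poly q w) b"
    using assms(3) by (intro is_pole_divide) auto
  have "(\<lambda>w. poly r w) analytic_on {b}" for r :: "complex poly"
    using analytic_on_open[of UNIV "\<lambda>w. poly r w"] by (auto intro: holomorphic_intros analytic_on_subset)
  then show "isolated_singularity_at (\<lambda>w. poly p w / poly q w) b"
    by (intro isolated_singularity_at_divide isolated_singularity_at_analytic not_essential_analytic)
qed

lemma eventually_large_deriv_near_pole:
  fixes p q :: "complex poly" and b c :: complex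
  assumes "q \<noteq> 0" "poly q b = 0" "poly p b \<noteq> 0" "b \<noteq> 0"
  shows "\<forall>\<^sub>F w in at b. 1 < norm (c - deriv (\<lambda>w. poly p w / poly q w) w * (2 * pi * \<i> * w))"
proof -
  define R' where "R' = deriv (\<lambda>w. poly p w / poly q w)"
  have "filterlim R' at_infinity (at b)"
    using is_pole_deriv_poly_quotient[OF assms(1-3)] by (simp add: R'_def is_pole_def)
  then have "filterlim (\<lambda>w. (2 * pi * \<i> * w) * R' w) at_infinity (at b)"
    using assms(4) by (intro tendsto_mult_filterlim_at_infinity[of _ "2 * pi * \<i> * b"]) (auto intro!: tendsto_intros)
  then have "\<forall>\<^sub>F w in at b. 2 + norm c \<le> norm (R' w * (2 * pi * \<i> * w))"
    unfolding mult.commute[of "2 * pi * \<i> * _"] filterlim_at_infinity[OF order.refl]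
    by (metis add_pos_nonneg norm_ge_zero zero_less_numeral)
  then show ?thesis
    unfolding R'_def[symmetric]
  proof (rule eventually_mono)
    fix w
    assume "2 + norm c \<le> norm (R' w * (2 * pi * \<i> * w))"
    then show "1 < norm (c - R' w * (2 * pi * \<i> * w))"
      using norm_triangle_ineq3[of "R' w * (2 * pi * \<i> * w)" c] by (simp add: norm_minus_commute)
  qed
qed

lemma poly_quotient_surjective_near_pole:
  fixes p q :: "complex poly" and b :: complex and \<epsilon> :: real
  assumes "q \<noteq> 0" "poly q b = 0" "poly p b \<noteq> 0" "\<epsilon> > 0"
  shows "\<forall>\<^sub>F t in at_infinity. \<exists>w. w \<noteq> b \<and> dist w b < \<epsilon> \<and> poly p w / poly q w = t"
proof -
  have "open {w. poly p w \<noteq> 0}"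
    by (intro open_Collect_neq continuous_intros)
  then obtain \<rho> where "\<rho> > 0" and \<rho>: "ball b \<rho> \<subseteq> {w. poly p w \<noteq> 0}"
    using assms(3) open_contains_ball by blast
  define \<psi> where "\<psi> w = poly q w / poly p w" for w
  have "\<exists>\<^sub>F w in at b. poly q w \<noteq> 0"
    using eventually_at_poly_nonzero[OF assms(1)] by (intro eventually_frequently) auto
  then obtain w1 where "w1 \<noteq> b" "dist w1 b < \<rho>" "poly q w1 \<noteq> 0"
    using \<open>\<rho> > 0\<close> unfolding frequently_at by auto
  then have "\<psi> w1 \<noteq> \<psi> b" "w1 \<in> ball b \<rho>"
    using \<rho> assms(2) by (auto simp: \<psi>_def dist_commute)
  then have "\<not> \<psi> constant_on ball b \<rho>"
    using \<open>\<rho> > 0\<close> unfolding constant_on_def by (metis centre_in_ball)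
  moreover have "\<psi> holomorphic_on ball b \<rho>"
    unfolding \<psi>_def using \<rho> by (intro holomorphic_intros) auto
  ultimately have "open (\<psi> ` ball b (min \<epsilon> \<rho>))"
    by (intro open_mapping_thm[of _ "ball b \<rho>"]) (auto simp: assms(4))
  moreover have "0 \<in> \<psi> ` ball b (min \<epsilon> \<rho>)"
    using assms(2,4) \<open>\<rho> > 0\<close> by (auto simp: \<psi>_def intro!: image_eqI[of _ _ b])
  ultimately obtain \<delta> where "\<delta> > 0" and \<delta>: "ball 0 \<delta> \<subseteq> \<psi> ` ball b (min \<epsilon> \<rho>)"
    using open_contains_ball by blast
  show ?thesis
    unfolding eventually_at_infinity
  proof (rule exI[of _ "2 / \<delta>"], intro allI impI)
    fix t :: complex
    assume "2 / \<delta> \<le> norm t"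
    then have "t \<noteq> 0"
      using \<open>\<delta> > 0\<close> by auto
    have "norm (1 / t) \<le> \<delta> / 2"
      using \<open>2 / \<delta> \<le> norm t\<close> \<open>\<delta> > 0\<close> \<open>t \<noteq> 0\<close> by (simp add: norm_divide field_simps)
    then have "norm (1 / t) < \<delta>"
      using \<open>\<delta> > 0\<close> by linarith
    then have "1 / t \<in> \<psi> ` ball b (min \<epsilon> \<rho>)"
      using \<delta> by auto
    then obtain w where w: "w \<in> ball b (min \<epsilon> \<rho>)" "\<psi> w = 1 / t"
      by auto
    then have "poly p w \<noteq> 0" "poly q w \<noteq> 0"
      using \<rho> \<open>t \<noteq> 0\<close> by (auto simp: \<psi>_def)
    then show "\<exists>w. w \<noteq> b \<and> dist w b < \<epsilon> \<and> poly p w / poly q w = t"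
      using w assms(2) \<open>t \<noteq> 0\<close>
      by (intro exI[of _ w]) (auto simp: \<psi>_def dist_commute field_simps)
  qed
qed

lemma frequently_exp_poly_quotient_near_pole:
  fixes p q :: "complex poly" and b c :: complex and \<theta> :: real
  assumes "q \<noteq> 0" "poly q b = 0" "poly p b \<noteq> 0" "c \<noteq> 0" "\<theta> \<ge> 0"
  shows "\<exists>\<^sub>F w in at b. exp (2 * pi * \<i> * (poly p w / poly q w) / c) = exp (2 * pi * \<i> * \<theta>)"
  unfolding frequently_at
proof (intro allI impI)
  fix \<epsilon> :: real
  assume "\<epsilon> > 0"
  obtain T where T: "\<And>t. T \<le> norm t \<Longrightarrow> \<exists>w. w \<noteq> b \<and> dist w b < \<epsilon> \<and> poly p w / poly q w = t"
    using poly_quotient_surjective_near_pole[OF assms(1-3) \<open>\<epsilon> > 0\<close>] unfolding eventually_at_infinity by blast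
  obtain N :: nat where "T / norm c < of_nat N"
    using reals_Archimedean2 by blast
  then have "T < norm c * of_nat N"
    using assms(4) by (simp add: pos_divide_less_eq mult.commute)
  also have "\<dots> \<le> norm c * (of_nat N + \<theta>)"
    using assms(5) by (intro mult_left_mono) auto
  also have "\<dots> = norm (c * of_real (of_nat N + \<theta>))"
    unfolding norm_mult norm_of_real using assms(5) by simp
  finally obtain w where "w \<noteq> b" "dist w b < \<epsilon>" and w: "poly p w / poly q w = c * of_real (of_nat N + \<theta>)"
    using T by (meson less_imp_le)
  have "2 * pi * \<i> * (c * of_real (of_nat N + \<theta>)) / c = of_nat N * (2 * pi * \<i>) + 2 * pi * \<i> * \<theta>"
    using assms(4) by (simp add: field_simps)
  then have "exp (2 * pi * \<i> * (poly p w / poly q w) / c) = exp (2 * pi * \<i> * \<theta>)"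
    unfolding w by (simp add: exp_add exp_of_nat_mult)
  with \<open>w \<noteq> b\<close> \<open>dist w b < \<epsilon>\<close> show "\<exists>w\<in>UNIV. w \<noteq> b \<and> dist w b < \<epsilon> \<and>
      exp (2 * pi * \<i> * (poly p w / poly q w) / c) = exp (2 * pi * \<i> * \<theta>)"
    by blast
qed

lemma no_limit_if_frequently_pm_inverse:
  fixes K :: "complex \<Rightarrow> complex"
  assumes "b \<noteq> 0" and K_plus: "\<exists>\<^sub>F w in at b. K w = 1 / w" and K_minus: "\<exists>\<^sub>F w in at b. K w = - 1 / w"
  shows "\<not> (K \<longlongrightarrow> l) (at b)" "\<not> ((inverse \<circ> K) \<longlongrightarrow> l) (at b)"
proof
  assume lim: "(K \<longlongrightarrow> l) (at b)"
  have "((\<lambda>w. 1 / w) \<longlongrightarrow> 1 / b) (at b)" "((\<lambda>w. - 1 / w) \<longlongrightarrow> - 1 / b) (at b)"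
    using assms(1) by (auto intro!: tendsto_intros)
  then have "l = 1 / b" "l = - 1 / b"
    using tendsto_unique_frequently[OF lim] K_plus K_minus by blast+
  then show False
    using assms(1) by (simp add: field_simps)
next
  show "\<not> ((inverse \<circ> K) \<longlongrightarrow> l) (at b)"
  proof
    assume lim: "((inverse \<circ> K) \<longlongrightarrow> l) (at b)"
    have "\<exists>\<^sub>F w in at b. (inverse \<circ> K) w = w"
      using K_plus by (rule frequently_elim1) simp
    moreover have "\<exists>\<^sub>F w in at b. (inverse \<circ> K) w = - w"
      using K_minus by (rule frequently_elim1) simp
    ultimately have "l = b" "l = - b"
      using tendsto_unique_frequently[OF lim] tendsto_ident_at tendsto_minus[OF tendsto_ident_at] by blast+
    then show False
      using assms(1) by simp
  qed
qed

text \<open>Otherwise K(w) = exp (2 pi i (p/q)(w) / c) / w omits 0 and 1 near b, so by the great Picard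
  theorem K or 1/K has a limit at b; but K(w) = 1/w and K(w) = -1/w for w arbitrarily close to b.\<close>
lemma exp_poly_quotient_fixed_point_near_pole:
  fixes p q :: "complex poly" and b c :: complex and r :: real
  assumes "q \<noteq> 0" "poly q b = 0" "poly p b \<noteq> 0" "b \<noteq> 0" "c \<noteq> 0" "r > 0"
  shows "\<exists>w. w \<noteq> b \<and> dist w b < r \<and> poly q w \<noteq> 0 \<and>
           exp (2 * pi * \<i> * (poly p w / poly q w) / c) = w"
proof (rule ccontr)
  assume no_fixed_point: "\<not> ?thesis"
  define K where "K w = exp (2 * pi * \<i> * (poly p w / poly q w) / c) / w" for w
  have "\<forall>\<^sub>F w in at b. poly q w \<noteq> 0"
    by (rule eventually_at_poly_nonzero[OF assms(1)])
  moreover have "\<forall>\<^sub>F w in at b. w \<noteq> 0"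
    using tendsto_imp_eventually_ne[OF tendsto_ident_at assms(4)] .
  moreover have "\<forall>\<^sub>F w in at b. dist w b < r"
    using eventually_at_ball[OF assms(6), of b UNIV] by (simp add: dist_commute)
  ultimately have "\<forall>\<^sub>F w in at b. poly q w \<noteq> 0 \<and> w \<noteq> 0 \<and> dist w b < r"
    by eventually_elim auto
  then obtain r' where "r' > 0"
    and r': "\<And>w. w \<in> ball b r' - {b} \<Longrightarrow> poly q w \<noteq> 0 \<and> w \<noteq> 0 \<and> dist w b < r"
    unfolding eventually_at by (auto simp: dist_commute)
  have "K holomorphic_on ball b r' - {b}"
    unfolding K_def using r' by (intro holomorphic_intros) auto
  moreover have "K w \<noteq> 0 \<and> K w \<noteq> 1" if "w \<in> ball b r' - {b}" for w
    using r'[OF that] that no_fixed_point by (auto simp: K_def)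
  ultimately obtain l where limit: "(K \<longlongrightarrow> l) (at b) \<or> ((inverse \<circ> K) \<longlongrightarrow> l) (at b)"
    using great_Picard[OF open_ball _ zero_neq_one] \<open>r' > 0\<close> by (metis centre_in_ball)
  have "exp (2 * pi * \<i> * of_real 0) = 1" "exp (2 * pi * \<i> * of_real (1 / 2)) = - 1"
    by (simp_all add: exp_pi_i[folded mult.assoc])
  then have "\<exists>\<^sub>F w in at b. exp (2 * pi * \<i> * (poly p w / poly q w) / c) = 1"
    "\<exists>\<^sub>F w in at b. exp (2 * pi * \<i> * (poly p w / poly q w) / c) = - 1"
    using frequently_exp_poly_quotient_near_pole[OF assms(1-3,5), of 0]
      frequently_exp_poly_quotient_near_pole[OF assms(1-3,5), of "1 / 2"] by simp_all
  then have K_plus: "\<exists>\<^sub>F w in at b. K w = 1 / w" and K_minus: "\<exists>\<^sub>F w in at b. K w = - 1 / w"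
    unfolding K_def by (auto elim: frequently_elim1)
  with limit no_limit_if_frequently_pm_inverse[OF assms(4)] show False
    by blast
qed

lemma newton_identity_deriv_bound:
  fixes F :: "complex \<Rightarrow> complex" and p q :: "complex poly" and c w z0 :: complex
  assumes holF: "F holomorphic_on UNIV" and "F z1 \<noteq> 0"
    and "exp (2 * pi * \<i> * z0) = w" "poly q w \<noteq> 0" "c * z0 = poly p w / poly q w"
    and identity: "\<And>z. poly q (exp (2 * pi * \<i> * z)) * F z =
      (c * z * poly q (exp (2 * pi * \<i> * z)) - poly p (exp (2 * pi * \<i> * z))) * deriv F z"
  shows "norm (c - deriv (\<lambda>w. poly p w / poly q w) w * (2 * pi * \<i> * w)) \<le> 1"
proof -
  define R where "R w = poly p w / poly q w" for w
  define S where "S = {z. poly q (exp (2 * pi * \<i> * z)) \<noteq> 0}"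
  define g where "g z = c * z - R (exp (2 * pi * \<i> * z))" for z
  have "open S"
    unfolding S_def by (intro open_Collect_neq continuous_intros)
  have "z0 \<in> S"
    using assms(3,4) by (simp add: S_def)
  have "g holomorphic_on S"
    unfolding g_def R_def S_def by (intro holomorphic_intros) auto
  have "g z0 = 0"
    using assms(3,5) by (simp add: g_def R_def)
  have newton_quotient: "F z = g z * deriv F z" if "z \<in> S" for z
    using identity[of z] that by (simp add: S_def g_def R_def field_simps)
  then have "F z0 = 0"
    using \<open>z0 \<in> S\<close> \<open>g z0 = 0\<close> by simp
  have "norm (deriv g z0) \<le> 1"
    by (rule norm_deriv_newton_quotient_at_zero_le[OF holF \<open>F z1 \<noteq> 0\<close> \<open>F z0 = 0\<close> \<open>open S\<close> \<open>z0 \<in> S\<close>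
          \<open>g holomorphic_on S\<close> \<open>g z0 = 0\<close> newton_quotient])
  moreover have "(R has_field_derivative deriv R w) (at w)"
    using assms(4) unfolding R_def
    by (intro holomorphic_derivI[of _ "{w. poly q w \<noteq> 0}"] holomorphic_intros open_Collect_neq continuous_intros) auto
  then have "(g has_field_derivative c - deriv R w * (2 * pi * \<i> * w)) (at z0)"
    unfolding g_def using assms(3) by (auto intro!: derivative_eq_intros DERIV_chain2[of R])
  ultimately show ?thesis
    by (simp add: DERIV_imp_deriv R_def[abs_def])
qed

lemma newton_identity_slope_zero:
  fixes F :: "complex \<Rightarrow> complex" and p q :: "complex poly" and c :: complex
  assumes holF: "F holomorphic_on UNIV" and "F z1 \<noteq> 0"
    and "coprime p q" "poly q 0 \<noteq> 0" "1 \<le> degree q"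
    and identity: "\<And>z. poly q (exp (2 * pi * \<i> * z)) * F z =
      (c * z * poly q (exp (2 * pi * \<i> * z)) - poly p (exp (2 * pi * \<i> * z))) * deriv F z"
  shows "c = 0"
proof (rule ccontr)
  assume "c \<noteq> 0"
  define R where "R w = poly p w / poly q w" for w
  have "q \<noteq> 0"
    using assms(5) by auto
  obtain b where "poly q b = 0"
    using fundamental_theorem_of_algebra assms(5) constant_degree by (metis not_one_le_zero)
  then have "b \<noteq> 0" "poly p b \<noteq> 0"
    using assms(4) coprime_poly_0[OF \<open>coprime p q\<close>] by auto
  obtain r where "r > 0"
    and large_deriv: "\<And>w. w \<noteq> b \<Longrightarrow> dist w b < r \<Longrightarrow> 1 < norm (c - deriv R w * (2 * pi * \<i> * w))"
    using eventually_large_deriv_near_pole[OF \<open>q \<noteq> 0\<close> \<open>poly q b = 0\<close> \<open>poly p b \<noteq> 0\<close> \<open>b \<noteq> 0\<close>, of c]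
    unfolding eventually_at R_def[abs_def] by blast
  obtain w where "w \<noteq> b" "dist w b < r" "poly q w \<noteq> 0" and fixed_point: "exp (2 * pi * \<i> * R w / c) = w"
    using exp_poly_quotient_fixed_point_near_pole[OF \<open>q \<noteq> 0\<close> \<open>poly q b = 0\<close> \<open>poly p b \<noteq> 0\<close>
        \<open>b \<noteq> 0\<close> \<open>c \<noteq> 0\<close> \<open>r > 0\<close>]
    unfolding R_def by auto
  have "exp (2 * pi * \<i> * (R w / c)) = w" "c * (R w / c) = R w"
    using fixed_point \<open>c \<noteq> 0\<close> by simp_all
  then have "norm (c - deriv R w * (2 * pi * \<i> * w)) \<le> 1"
    unfolding R_def[abs_def]
    using newton_identity_deriv_bound[OF holF \<open>F z1 \<noteq> 0\<close> _ \<open>poly q w \<noteq> 0\<close> _ identity] by blast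
  then show False
    using large_deriv[OF \<open>w \<noteq> b\<close> \<open>dist w b < r\<close>] by simp
qed

section \<open>Integrating the Newton identity for l = 1\<close>

locale newton_identity_R1 =
  fixes F :: "complex \<Rightarrow> complex" and p q :: "complex poly"
  assumes entire: "F holomorphic_on UNIV"
    and somewhere_nonzero: "\<exists>z. F z \<noteq> 0"
    and coprime: "coprime p q"
    and p_nonzero: "p \<noteq> 0"
    and q_at_0: "poly q 0 \<noteq> 0"
    and degree_p_le: "degree p \<le> degree q"
    and identity: "\<And>z. poly q (exp (2 * pi * \<i> * z)) * F z = - poly p (exp (2 * pi * \<i> * z)) * deriv F z"
begin

definition ord0 :: nat where "ord0 = order 0 p"
definition p1 :: "complex poly" where "p1 = p div [:0, 1:] ^ ord0"
definition nonzero_roots :: "complex set" where "nonzero_roots = {a. poly p1 a = 0}"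

lemma p_eq: "p = [:0, 1:] ^ ord0 * p1"
  unfolding p1_def ord0_def using order_1[of 0 p] by simp

lemma poly_p: "poly p w = w ^ ord0 * poly p1 w"
  by (subst p_eq) (simp add: poly_power)

lemma p1_nonzero: "p1 \<noteq> 0"
  using p_eq p_nonzero by auto

lemma poly_p1_0: "poly p1 0 \<noteq> 0"
proof
  assume "poly p1 0 = 0"
  then obtain r where "p1 = [:0, 1:] * r"
    by (metis dvdE minus_zero poly_eq_0_iff_dvd)
  then have "p = [:0, 1:] ^ Suc ord0 * r"
    using p_eq by (metis mult.assoc power_Suc2)
  then have "[:0, 1:] ^ Suc ord0 dvd p"
    by (metis dvd_triv_left)
  then show False
    using order_2[OF p_nonzero, of 0] by (simp add: ord0_def)
qed

lemma finite_nonzero_roots: "finite nonzero_roots"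
  unfolding nonzero_roots_def using poly_roots_finite[OF p1_nonzero] .

lemma zero_notin_nonzero_roots: "0 \<notin> nonzero_roots"
  using poly_p1_0 by (simp add: nonzero_roots_def)

lemma poly_p_eq_0_iff: "w \<noteq> 0 \<Longrightarrow> poly p w = 0 \<longleftrightarrow> w \<in> nonzero_roots"
  by (simp add: poly_p nonzero_roots_def)

text \<open>At a point z with exp (2 pi i z) = a, the function -p/q (exp (2 pi i z)) plays the role
  of F/F'.\<close>
lemma exists_zero_multiplicity:
  assumes "a \<in> nonzero_roots"
  shows "\<exists>m::nat. m > 0 \<and>
    poly q a = - (of_nat m * (2 * pi * \<i>) * a ^ Suc ord0 * poly (pderiv p1) a)"
proof -
  have "a \<noteq> 0"
    using assms zero_notin_nonzero_roots by auto
  then have "poly p a = 0"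
    using assms poly_p_eq_0_iff by simp
  then have "poly q a \<noteq> 0"
    using coprime_poly_0[OF coprime] by auto
  define za where "za = Ln a / (2 * pi * \<i>)"
  have exp_za: "exp (2 * pi * \<i> * za) = a"
    using \<open>a \<noteq> 0\<close> by (simp add: za_def)
  define S where "S = {z. poly q (exp (2 * pi * \<i> * z)) \<noteq> 0}"
  define g where "g z = - (poly p (exp (2 * pi * \<i> * z)) / poly q (exp (2 * pi * \<i> * z)))" for z
  have "open S"
    unfolding S_def by (intro open_Collect_neq continuous_intros)
  have "za \<in> S"
    using exp_za \<open>poly q a \<noteq> 0\<close> by (simp add: S_def)
  have "g holomorphic_on S"
    unfolding g_def S_def by (intro holomorphic_intros) auto
  have "g za = 0"
    unfolding g_def exp_za using \<open>poly p a = 0\<close> by simp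
  have newton_quotient: "F z = g z * deriv F z" if "z \<in> S" for z
    using identity[of z] that by (simp add: S_def g_def field_simps)
  then have "F za = 0"
    using \<open>za \<in> S\<close> \<open>g za = 0\<close> by simp
  obtain z1 where "F z1 \<noteq> 0"
    using somewhere_nonzero by blast
  obtain m :: nat where "m > 0" "of_nat m * deriv g za = 1"
    using deriv_newton_quotient_at_zero[OF entire \<open>F z1 \<noteq> 0\<close> \<open>F za = 0\<close> \<open>open S\<close> \<open>za \<in> S\<close>
        \<open>g holomorphic_on S\<close> \<open>g za = 0\<close> newton_quotient] by blast
  have "(g has_field_derivative - (poly (pderiv p) a * (2 * pi * \<i> * a) / poly q a)) (at za)"
    unfolding g_def using exp_za \<open>poly q a \<noteq> 0\<close> \<open>poly p a = 0\<close>
    by (auto intro!: derivative_eq_intros poly_DERIV[THEN DERIV_chain2] simp: field_simps)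
  then have "deriv g za = - (poly (pderiv p) a * (2 * pi * \<i> * a) / poly q a)"
    by (rule DERIV_imp_deriv)
  moreover have "poly (pderiv p) a = a ^ ord0 * poly (pderiv p1) a"
    using \<open>a \<in> nonzero_roots\<close> by (subst p_eq) (simp add: pderiv_mult nonzero_roots_def)
  ultimately have "deriv g za * poly q a = - (2 * pi * \<i> * a ^ Suc ord0 * poly (pderiv p1) a)"
    using \<open>poly q a \<noteq> 0\<close> by (simp add: field_simps)
  moreover have "poly q a = of_nat m * (deriv g za * poly q a)"
    using \<open>of_nat m * deriv g za = 1\<close> by (metis mult.assoc mult_1)
  ultimately have "poly q a = - (of_nat m * (2 * pi * \<i>) * a ^ Suc ord0 * poly (pderiv p1) a)"
    by (simp add: algebra_simps)
  then show ?thesis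
    using \<open>m > 0\<close> by blast
qed

text \<open>The common multiplicity of the zeros of F at the points z with exp (2 pi i z) = a.\<close>
definition zero_mult :: "complex \<Rightarrow> nat" where
  "zero_mult a = (SOME m. m > 0 \<and> poly q a = - (of_nat m * (2 * pi * \<i>) * a ^ Suc ord0 * poly (pderiv p1) a))"

lemma zero_mult_pos: "a \<in> nonzero_roots \<Longrightarrow> zero_mult a > 0"
  and poly_q_at_root: "a \<in> nonzero_roots \<Longrightarrow>
    poly q a = - (of_nat (zero_mult a) * (2 * pi * \<i>) * a ^ Suc ord0 * poly (pderiv p1) a)"
  using someI_ex[OF exists_zero_multiplicity] by (auto simp: zero_mult_def)

lemma pderiv_p1_at_root: "a \<in> nonzero_roots \<Longrightarrow> poly (pderiv p1) a \<noteq> 0"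
  using poly_q_at_root coprime_poly_0[OF coprime, of a] poly_p_eq_0_iff zero_notin_nonzero_roots
  by (metis mult_zero_right neg_equal_0_iff_equal)

definition residue_sum :: "complex poly" where
  "residue_sum = (\<Sum>a\<in>nonzero_roots. smult (of_nat (zero_mult a)) (p1 div [:-a, 1:]))"

lemma p1_div_linear: "a \<in> nonzero_roots \<Longrightarrow> p1 = [:-a, 1:] * (p1 div [:-a, 1:])"
  by (metis dvd_mult_div_cancel mem_Collect_eq nonzero_roots_def poly_eq_0_iff_dvd)

lemma poly_p1_div_linear:
  assumes "a \<in> nonzero_roots" "w \<noteq> a"
  shows "poly (p1 div [:-a, 1:]) w = poly p1 w / (w - a)"
proof -
  have "poly p1 w = (w - a) * poly (p1 div [:-a, 1:]) w"
    by (subst (1) p1_div_linear[OF assms(1)]) (simp add: algebra_simps)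
  then show ?thesis
    using assms(2) by simp
qed

lemma poly_p1_div_linear_at_root:
  assumes "a \<in> nonzero_roots"
  shows "poly (p1 div [:-a, 1:]) a = poly (pderiv p1) a"
proof -
  define h where "h = p1 div [:-a, 1:]"
  have "pderiv p1 = [:-a, 1:] * pderiv h + h"
    by (subst p1_div_linear[OF assms, folded h_def]) (simp add: pderiv_mult pderiv_pCons del: mult_pCons_left)
  then show ?thesis
    unfolding h_def by simp
qed

lemma poly_residue_sum_at_root:
  assumes "a \<in> nonzero_roots"
  shows "poly residue_sum a = of_nat (zero_mult a) * poly (pderiv p1) a"
proof -
  have "poly residue_sum a = (\<Sum>b\<in>nonzero_roots. of_nat (zero_mult b) * poly (p1 div [:-b, 1:]) a)"
    by (simp add: residue_sum_def poly_sum)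
  also have "\<dots> = of_nat (zero_mult a) * poly (p1 div [:-a, 1:]) a
      + (\<Sum>b\<in>nonzero_roots - {a}. of_nat (zero_mult b) * poly (p1 div [:-b, 1:]) a)"
    by (rule sum.remove[OF finite_nonzero_roots assms])
  also have "(\<Sum>b\<in>nonzero_roots - {a}. of_nat (zero_mult b) * poly (p1 div [:-b, 1:]) a) = 0"
  proof (rule sum.neutral, rule ballI)
    fix b assume "b \<in> nonzero_roots - {a}"
    then have "poly (p1 div [:-b, 1:]) a = 0"
      using assms poly_p1_div_linear[of b a] by (auto simp: nonzero_roots_def)
    then show "of_nat (zero_mult b) * poly (p1 div [:-b, 1:]) a = 0"
      by simp
  qed
  finally show ?thesis
    using poly_p1_div_linear_at_root[OF assms] by simp
qed

lemma poly_residue_sum: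
  assumes "w \<notin> nonzero_roots"
  shows "poly residue_sum w = poly p1 w * (\<Sum>a\<in>nonzero_roots. of_nat (zero_mult a) / (w - a))"
  unfolding residue_sum_def poly_sum poly_smult sum_distrib_left
proof (rule sum.cong)
  fix a assume "a \<in> nonzero_roots"
  moreover from this have "w \<noteq> a"
    using assms by auto
  ultimately show "of_nat (zero_mult a) * poly (p1 div [:-a, 1:]) w = poly p1 w * (of_nat (zero_mult a) / (w - a))"
    using poly_p1_div_linear[of a w] by simp
qed simp

text \<open>laurent_numerator(w) / w^ord0 is what remains of -q(w)/p(w) after removing the simple poles
  at the nonzero roots of p.\<close>
definition laurent_numerator :: "complex poly" where
  "laurent_numerator = (- q - smult (2 * pi * \<i>) (monom 1 (Suc ord0) * residue_sum)) div p1"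

lemma q_decomposition:
  "- q = p1 * laurent_numerator + smult (2 * pi * \<i>) (monom 1 (Suc ord0) * residue_sum)"
proof -
  have "p1 dvd - q - smult (2 * pi * \<i>) (monom 1 (Suc ord0) * residue_sum)"
  proof (rule poly_dvd_if_simple_roots[OF p1_nonzero])
    fix a
    assume "poly p1 a = 0"
    then have "a \<in> nonzero_roots"
      by (simp add: nonzero_roots_def)
    then show "poly (- q - smult (2 * pi * \<i>) (monom 1 (Suc ord0) * residue_sum)) a = 0 \<and>
        poly (pderiv p1) a \<noteq> 0"
      using poly_q_at_root poly_residue_sum_at_root pderiv_p1_at_root
      by (simp add: poly_monom algebra_simps)
  qed
  then show ?thesis
    unfolding laurent_numerator_def by (simp add: dvd_mult_div_cancel)
qed

lemma minus_q_div_p: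
  assumes "w \<noteq> 0" "w \<notin> nonzero_roots"
  shows "- poly q w / poly p w = poly laurent_numerator w / w ^ ord0
           + 2 * pi * \<i> * w * (\<Sum>a\<in>nonzero_roots. of_nat (zero_mult a) / (w - a))"
proof -
  have "poly p1 w \<noteq> 0"
    using assms(2) by (simp add: nonzero_roots_def)
  have "- poly q w = poly p1 w * poly laurent_numerator w + 2 * pi * \<i> * (w ^ Suc ord0 * poly residue_sum w)"
    using arg_cong[OF q_decomposition, of "\<lambda>r. poly r w"] by (simp add: poly_monom)
  then show ?thesis
    using assms(1) \<open>poly p1 w \<noteq> 0\<close> unfolding poly_p poly_residue_sum[OF assms(2)]
    by (simp add: field_simps)
qed

definition Lambda :: complex where
  "Lambda = coeff laurent_numerator ord0"

definition Q_pos :: "complex poly" where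
  "Q_pos = inv pderiv (smult (1 / (2 * pi * \<i>)) (poly_shift (Suc ord0) laurent_numerator))"

definition Q_neg :: "complex poly" where
  "Q_neg = inv pderiv (smult (- 1 / (2 * pi * \<i>)) (principal_part_poly ord0 laurent_numerator))"

definition root_product :: "complex poly" where
  "root_product = (\<Prod>a\<in>nonzero_roots. [:-a, 1:] ^ zero_mult a)"

lemma pderiv_Q_pos: "pderiv Q_pos = smult (1 / (2 * pi * \<i>)) (poly_shift (Suc ord0) laurent_numerator)"
  unfolding Q_pos_def by (rule surj_f_inv_f[OF surj_pderiv])

lemma pderiv_Q_neg: "pderiv Q_neg = smult (- 1 / (2 * pi * \<i>)) (principal_part_poly ord0 laurent_numerator)"
  unfolding Q_neg_def by (rule surj_f_inv_f[OF surj_pderiv])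

lemma laurent_numerator_div_power:
  assumes "w \<noteq> 0"
  shows "poly laurent_numerator w / w ^ ord0 =
    Lambda + 2 * pi * \<i> * (w * poly (pderiv Q_pos) w - inverse w * poly (pderiv Q_neg) (inverse w))"
  using poly_div_power_laurent[OF assms, of laurent_numerator ord0]
  by (simp add: pderiv_Q_pos pderiv_Q_neg Lambda_def algebra_simps)

lemma poly_root_product_eq_0_iff: "poly root_product w = 0 \<longleftrightarrow> w \<in> nonzero_roots"
  using finite_nonzero_roots zero_mult_pos by (auto simp: root_product_def poly_prod prod_zero_iff)

lemma degree_root_product: "degree root_product = (\<Sum>a\<in>nonzero_roots. zero_mult a)"
  unfolding root_product_def by (subst degree_prod_sum_eq) (auto simp: degree_linear_power)

lemma deriv_periodic_form_eq:
  assumes "poly p (exp (2 * pi * \<i> * z)) \<noteq> 0"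
  shows "deriv (periodic_form Lambda root_product Q_pos Q_neg) z =
    periodic_form Lambda root_product Q_pos Q_neg z * (- poly q (exp (2 * pi * \<i> * z)) / poly p (exp (2 * pi * \<i> * z)))"
proof -
  define w where "w = exp (2 * pi * \<i> * z)"
  define E where "E = exp (Lambda * z + poly Q_pos w + poly Q_neg (inverse w))"
  have "w \<noteq> 0" "w \<notin> nonzero_roots"
    using assms poly_p_eq_0_iff by (auto simp: w_def)
  have "deriv (periodic_form Lambda root_product Q_pos Q_neg) z =
      E * ((Lambda + 2 * pi * \<i> * (w * poly (pderiv Q_pos) w - inverse w * poly (pderiv Q_neg) (inverse w)))
        * poly root_product w + 2 * pi * \<i> * w * poly (pderiv root_product) w)"
    unfolding E_def w_def by (rule DERIV_imp_deriv[OF has_field_derivative_periodic_form])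
  also have "poly (pderiv root_product) w = poly root_product w * (\<Sum>a\<in>nonzero_roots. of_nat (zero_mult a) / (w - a))"
    unfolding root_product_def by (rule poly_pderiv_prod_linear_powers[OF finite_nonzero_roots \<open>w \<notin> nonzero_roots\<close>])
  also have "Lambda + 2 * pi * \<i> * (w * poly (pderiv Q_pos) w - inverse w * poly (pderiv Q_neg) (inverse w)) =
      poly laurent_numerator w / w ^ ord0"
    by (rule laurent_numerator_div_power[OF \<open>w \<noteq> 0\<close>, symmetric])
  also have "E * (poly laurent_numerator w / w ^ ord0 * poly root_product w +
      2 * pi * \<i> * w * (poly root_product w * (\<Sum>a\<in>nonzero_roots. of_nat (zero_mult a) / (w - a)))) =
      E * poly root_product w * (- poly q w / poly p w)"
    unfolding minus_q_div_p[OF \<open>w \<noteq> 0\<close> \<open>w \<notin> nonzero_roots\<close>] by (simp add: algebra_simps)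
  also have "E * poly root_product w = periodic_form Lambda root_product Q_pos Q_neg z"
    by (simp add: periodic_form_def E_def w_def exp_minus)
  finally show ?thesis
    unfolding w_def .
qed

lemma F_eq_periodic_form: "\<exists>\<kappa>. \<kappa> \<noteq> 0 \<and> (\<forall>z. F z = \<kappa> * periodic_form Lambda root_product Q_pos Q_neg z)"
proof -
  define T where "T = periodic_form Lambda root_product Q_pos Q_neg"
  have "\<forall>\<^sub>\<approx>z. poly p (exp (2 * pi * \<i> * z)) \<noteq> 0"
    using p_nonzero by (intro eventually_cosparse_poly_exp_nonzero) auto
  then obtain z2 where "poly p (exp (2 * pi * \<i> * z2)) \<noteq> 0"
    using eventually_happens[of _ "cosparse UNIV"] by force
  then have "T z2 \<noteq> 0"
    using poly_p_eq_0_iff poly_root_product_eq_0_iff by (auto simp: T_def periodic_form_eq_0_iff)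
  have "\<forall>\<^sub>\<approx>z. deriv F z * T z = F z * deriv T z"
  proof (rule eventually_mono[OF \<open>\<forall>\<^sub>\<approx>z. poly p (exp (2 * pi * \<i> * z)) \<noteq> 0\<close>])
    fix z
    assume "poly p (exp (2 * pi * \<i> * z)) \<noteq> 0"
    moreover from this have "deriv F z = - poly q (exp (2 * pi * \<i> * z)) / poly p (exp (2 * pi * \<i> * z)) * F z"
      using identity[of z] by (simp add: field_simps)
    ultimately show "deriv F z * T z = F z * deriv T z"
      unfolding T_def deriv_periodic_form_eq[OF \<open>poly p (exp (2 * pi * \<i> * z)) \<noteq> 0\<close>]
      by simp
  qed
  then have wronskian: "deriv F z * T z = F z * deriv T z" for z
    unfolding T_def using entire holomorphic_periodic_form
    by (intro eq_if_eventually_cosparse_eq[rotated 2])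
      (auto intro!: holomorphic_on_imp_continuous_on holomorphic_intros holomorphic_deriv)
  have "T holomorphic_on UNIV"
    unfolding T_def by (rule holomorphic_periodic_form)
  then obtain \<kappa> where "\<forall>z. F z = \<kappa> * T z"
    using proportional_if_wronskian_zero[OF entire _ \<open>T z2 \<noteq> 0\<close> wronskian] by blast
  moreover have "\<kappa> \<noteq> 0"
    using somewhere_nonzero calculation by auto
  ultimately show ?thesis
    unfolding T_def by blast
qed

lemma Lambda_nonzero:
  assumes "pderiv Q_neg = 0"
  shows "Lambda \<noteq> 0"
proof -
  have "principal_part_poly ord0 laurent_numerator = 0"
    using assms by (simp add: pderiv_Q_neg)
  then have low_coeffs: "\<forall>j<ord0. coeff laurent_numerator j = 0"
    by (simp add: principal_part_poly_eq_0_iff)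
  have "- poly q 0 = poly p1 0 * poly laurent_numerator 0"
    using arg_cong[OF q_decomposition, of "\<lambda>r. poly r 0"] by (simp add: poly_monom)
  then have "coeff laurent_numerator 0 \<noteq> 0"
    using q_at_0 by (auto simp: poly_0_coeff_0)
  then have "ord0 = 0"
    using low_coeffs by auto
  then show ?thesis
    using \<open>coeff laurent_numerator 0 \<noteq> 0\<close> by (simp add: Lambda_def)
qed

lemma degree_lead_coeff_p1_div_linear:
  assumes "a \<in> nonzero_roots"
  shows "degree (p1 div [:-a, 1:]) = degree p1 - 1" "lead_coeff (p1 div [:-a, 1:]) = lead_coeff p1"
proof -
  define h where "h = p1 div [:-a, 1:]"
  have p1_eq: "p1 = [:-a, 1:] * h"
    unfolding h_def by (rule p1_div_linear[OF assms])
  then have "h \<noteq> 0"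
    using p1_nonzero by auto
  have "degree p1 = degree h + 1"
    using \<open>h \<noteq> 0\<close> by (subst p1_eq) (simp add: degree_mult_eq del: mult_pCons_left)
  then show "degree (p1 div [:-a, 1:]) = degree p1 - 1"
    by (simp add: h_def)
  have "lead_coeff p1 = lead_coeff [:-a, 1:] * lead_coeff h"
    by (metis p1_eq lead_coeff_mult)
  then show "lead_coeff (p1 div [:-a, 1:]) = lead_coeff p1"
    by (simp add: h_def)
qed

lemma degree_residue_sum: "degree residue_sum \<le> degree p1 - 1"
  unfolding residue_sum_def using degree_lead_coeff_p1_div_linear
  by (intro degree_sum_le finite_nonzero_roots) (auto intro: order.trans[OF degree_smult_le])

lemma coeff_residue_sum: "coeff residue_sum (degree p1 - 1) = of_nat (degree root_product) * lead_coeff p1"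
proof -
  have "coeff residue_sum (degree p1 - 1) = (\<Sum>a\<in>nonzero_roots. of_nat (zero_mult a) * lead_coeff p1)"
    unfolding residue_sum_def coeff_sum coeff_smult
    using degree_lead_coeff_p1_div_linear by (intro sum.cong) auto
  then show ?thesis
    by (simp add: degree_root_product sum_distrib_right)
qed

lemma degree_q_le:
  assumes "degree laurent_numerator \<le> ord0" "1 \<le> degree p1"
  shows "degree q \<le> ord0 + degree p1"
proof -
  have "degree (p1 * laurent_numerator) \<le> ord0 + degree p1"
    using degree_mult_le[of p1 laurent_numerator] assms(1) by linarith
  moreover have "degree (monom (1::complex) (Suc ord0) * residue_sum) \<le> ord0 + degree p1"
    using degree_mult_le[of "monom (1::complex) (Suc ord0)" residue_sum] degree_residue_sum assms(2)
    by (simp add: degree_monom_eq)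
  ultimately have "degree (- q) \<le> ord0 + degree p1"
    unfolding q_decomposition by (intro degree_add_le) (auto intro: order.trans[OF degree_smult_le])
  then show ?thesis
    by simp
qed

lemma Lambda_plus_nonzero:
  assumes "pderiv Q_pos = 0" "nonzero_roots \<noteq> {}"
  shows "Lambda + 2 * pi * \<i> * of_nat (degree root_product) \<noteq> 0"
proof
  assume Lambda_eq: "Lambda + 2 * pi * \<i> * of_nat (degree root_product) = 0"
  define n where "n = degree p1"
  have "n \<ge> 1"
  proof (rule ccontr)
    assume "\<not> n \<ge> 1"
    then obtain c where "p1 = [:c:]"
      unfolding n_def by (metis degree_eq_zeroE less_one not_le)
    then show False
      using assms(2) poly_p1_0 by (auto simp: nonzero_roots_def)
  qed
  have "poly_shift (Suc ord0) laurent_numerator = 0"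
    using assms(1) by (simp add: pderiv_Q_pos)
  then have "degree laurent_numerator \<le> ord0"
    by (intro degree_le) (metis coeff_poly_shift coeff_0 Suc_leI add_diff_inverse_nat not_less_eq add.commute)
  then have "coeff (p1 * laurent_numerator) (ord0 + n) = lead_coeff p1 * Lambda"
    using coeff_mult_degree_le_sum[of laurent_numerator ord0 p1] by (simp add: Lambda_def n_def add.commute)
  moreover have "coeff (monom 1 (Suc ord0) * residue_sum) (ord0 + n) = of_nat (degree root_product) * lead_coeff p1"
    using \<open>n \<ge> 1\<close> coeff_residue_sum by (simp add: coeff_monom_mult n_def)
  ultimately have "coeff (- q) (ord0 + n) = lead_coeff p1 * (Lambda + 2 * pi * \<i> * of_nat (degree root_product))"
    unfolding q_decomposition by (simp add: algebra_simps)
  then have "coeff q (ord0 + n) = 0"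
    using Lambda_eq by simp
  moreover have "degree p = ord0 + n"
    using p1_nonzero by (subst p_eq) (simp add: degree_mult_eq degree_linear_power n_def)
  then have "degree q = ord0 + n"
    using degree_p_le degree_q_le[OF \<open>degree laurent_numerator \<le> ord0\<close>] \<open>n \<ge> 1\<close> by (simp add: n_def)
  ultimately show False
    using q_at_0 by (metis leading_coeff_0_iff poly_0)
qed

lemma periodic_form_representation:
  assumes "F z0 = 0"
  obtains L :: complex and R Q1 Q2 :: "complex poly"
  where "poly R 0 \<noteq> 0" "poly R (exp (2 * pi * \<i> * z0)) = 0"
    "degree Q1 = 0 \<Longrightarrow> L + 2 * pi * \<i> * of_nat (degree R) \<noteq> 0" "degree Q2 = 0 \<Longrightarrow> L \<noteq> 0"
    "\<And>z. F z = periodic_form L R Q1 Q2 z"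
proof -
  obtain \<kappa> where "\<kappa> \<noteq> 0" and F_eq: "\<And>z. F z = \<kappa> * periodic_form Lambda root_product Q_pos Q_neg z"
    using F_eq_periodic_form by blast
  define Q where "Q = Q_pos + [:Ln \<kappa>:]"
  show ?thesis
  proof
    show "F z = periodic_form Lambda root_product Q Q_neg z" for z
      unfolding F_eq Q_def by (rule mult_periodic_form[OF \<open>\<kappa> \<noteq> 0\<close>])
    then show "poly root_product (exp (2 * pi * \<i> * z0)) = 0"
      using assms by (simp add: periodic_form_eq_0_iff)
    then show "degree Q = 0 \<Longrightarrow> Lambda + 2 * pi * \<i> * of_nat (degree root_product) \<noteq> 0"
      using Lambda_plus_nonzero poly_root_product_eq_0_iff
      by (auto simp: Q_def pderiv_add pderiv_eq_0_iff[symmetric])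
    show "degree Q_neg = 0 \<Longrightarrow> Lambda \<noteq> 0"
      using Lambda_nonzero by (simp add: pderiv_eq_0_iff)
    show "poly root_product 0 \<noteq> 0"
      using zero_notin_nonzero_roots by (simp add: poly_root_product_eq_0_iff)
  qed
qed

end

lemma l_eq_1_and_newton_identity_R1_if_class_R:
  fixes F :: "complex \<Rightarrow> complex" and l :: int
  assumes "F holomorphic_on UNIV" "F z0 = 0" "F z1 \<noteq> 0" "class_R l (newton_map F)"
  obtains p q where "l = 1" "newton_identity_R1 F p q"
proof -
  obtain p q where pq: "coprime p q" "p \<noteq> 0" "q \<noteq> 0" "poly q 0 \<noteq> 0" "max (degree p) 1 \<le> degree q"
    and identity: "\<And>z. poly q (exp (2 * pi * \<i> * z)) * F z =
      ((1 - of_int l) * z * poly q (exp (2 * pi * \<i> * z)) - poly p (exp (2 * pi * \<i> * z))) * deriv F z"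
    using newton_identity_of_class_R[OF assms(1) _ assms(4), of z0 z1] assms(2,3) by auto
  have "(1 - of_int l :: complex) = 0"
    using pq by (intro newton_identity_slope_zero[OF assms(1,3) _ _ _ identity]) auto
  then have "l = 1"
    by simp
  moreover have "newton_identity_R1 F p q"
    using assms(1,3) pq identity \<open>l = 1\<close> by unfold_locales auto
  ultimately show ?thesis
    by (rule that)
qed

theorem theoremC:
  fixes F :: "complex \<Rightarrow> complex" and l :: int
  assumes "F holomorphic_on UNIV"
    and "\<exists>z. F z = 0"
    and "\<exists>z. F z \<noteq> 0"
  shows "class_R l (newton_map F) \<longleftrightarrow>
    (l = 1 \<and>
     (\<exists>(\<Lambda>::complex) (m0::int) (P::complex poly) (Q::complex poly) (Qt::complex poly).
        poly P 0 \<noteq> 0 \<and> (\<exists>w. w \<noteq> 0 \<and> poly P w = 0) \<and>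
        (degree Q = 0 \<longrightarrow> \<Lambda> \<noteq> - 2 * pi * \<i> * (of_int m0 + of_nat (degree P))) \<and>
        (degree Qt = 0 \<longrightarrow> \<Lambda> \<noteq> - 2 * pi * \<i> * of_int m0) \<and>
        (\<forall>z. F z = exp (\<Lambda> * z) *
           (let w = exp (2 * pi * \<i> * z) in
              w powi m0 * poly P w * exp (poly Q w + poly Qt (1 / w))))))"
    (is "?lhs \<longleftrightarrow> l = 1 \<and> ?normal_form")
proof
  assume ?lhs
  obtain z0 z1 where "F z0 = 0" "F z1 \<noteq> 0"
    using assms(2,3) by blast
  then obtain p q where "l = 1" and "newton_identity_R1 F p q"
    using l_eq_1_and_newton_identity_R1_if_class_R[OF assms(1) _ _ \<open>?lhs\<close>] by blast
  interpret newton_identity_R1 F p q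
    by fact
  have ?normal_form
  proof (rule periodic_form_representation[OF \<open>F z0 = 0\<close>])
    fix L :: complex and R Q1 Q2 :: "complex poly"
    assume "poly R 0 \<noteq> 0" "poly R (exp (2 * pi * \<i> * z0)) = 0"
      and "degree Q1 = 0 \<Longrightarrow> L + 2 * pi * \<i> * of_nat (degree R) \<noteq> 0" "degree Q2 = 0 \<Longrightarrow> L \<noteq> 0"
      and "\<And>z. F z = periodic_form L R Q1 Q2 z"
    then show ?normal_form
      using normal_form_eq_periodic_form[of L _ 0 R Q1 Q2]
      by (rule_tac exI[of _ L], rule_tac exI[of _ "0::int"], rule_tac exI[of _ R], rule_tac exI[of _ Q1],
          rule_tac exI[of _ Q2]) (auto simp: algebra_simps intro!: exI[of _ "exp (2 * pi * \<i> * z0)"])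
  qed
  with \<open>l = 1\<close> show "l = 1 \<and> ?normal_form" ..
next
  assume "l = 1 \<and> ?normal_form"
  then have "l = 1" and ?normal_form
    by simp_all
  from \<open>?normal_form\<close> show ?lhs
    unfolding \<open>l = 1\<close> by (elim exE conjE) (rule class_R_newton_map_normal_form)
qed

end
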